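(* Let $K$ be a field and $X$ a finite connected poset. For every Lie automorphism $\varphi$ of $I(X,K)$, the map $\widetilde\varphi$ is a bijective $K$-linear map of $I(X,K)$, and $\varphi\mapsto\widetilde\varphi$ is a group homomorphism from $\mathrm{LAut}(I(X,K))$ to $\mathrm{GL}(I(X,K))$, i.e. $\widetilde{\varphi\circ\psi}=\widetilde\varphi\circ\widetilde\psi$.
   Context: $I(X,K)$ is the incidence algebra: functions $f:X\times X\to K$ with $f(x,y)=0$ unless $x\le y$, product $(fg)(x,y)=\sum_{x\le t\le y}f(x,t)g(t,y)$; $e_{xy}$ ($x\le y$) is the basis element equal to $1$ at $(x,y)$ and $0$ elsewhere. $\mathrm{LAut}(I(X,K))$ is the group of bijective linear maps preserving $[f,g]=fg-gf$; $\mathrm{GL}(I(X,K))$ is the group of bijective $K$-linear maps. Let $l(\lfloor x,y\rfloor)$ be the maximum length of a chain in $\{z:x\le z\le y\}$, $L_i=\mathrm{span}_K\{e_{xy}: l(\lfloor x,y\rfloor)=i\}$ ($i\ge 0$), so $I(X,K)=\bigoplus_i L_i$. For $\varphi\in\mathrm{LAut}(I(X,K))$, $\widetilde\varphi$ is the linear map sending $e_{xy}\in L_i$ to the $L_i$-component of $\varphi(e_{xy})$ (one has $\varphi(e_{xy})-\widetilde\varphi(e_{xy})\in\bigoplus_{k>i}L_k$). Connected means any two elements are joined by a sequence in which consecutive elements are in a covering relation. *)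

theory Defs
  imports Main
begin

definition inc_alg :: "('a::{order,finite} \<Rightarrow> 'a \<Rightarrow> 'k::field) set" where
  "inc_alg = {f. \<forall>x y. \<not> x \<le> y \<longrightarrow> f x y = 0}"

definition inc_mult :: "('a::{order,finite} \<Rightarrow> 'a \<Rightarrow> 'k::field) \<Rightarrow> ('a \<Rightarrow> 'a \<Rightarrow> 'k) \<Rightarrow> ('a \<Rightarrow> 'a \<Rightarrow> 'k)" where
  "inc_mult f g = (\<lambda>x y. \<Sum>t\<in>{t. x \<le> t \<and> t \<le> y}. f x t * g t y)"

definition inc_add :: "('a \<Rightarrow> 'a \<Rightarrow> 'k::field) \<Rightarrow> ('a \<Rightarrow> 'a \<Rightarrow> 'k) \<Rightarrow> ('a \<Rightarrow> 'a \<Rightarrow> 'k)" where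
  "inc_add f g = (\<lambda>x y. f x y + g x y)"

definition inc_smult :: "'k::field \<Rightarrow> ('a \<Rightarrow> 'a \<Rightarrow> 'k) \<Rightarrow> ('a \<Rightarrow> 'a \<Rightarrow> 'k)" where
  "inc_smult c f = (\<lambda>x y. c * f x y)"

definition inc_comm :: "('a::{order,finite} \<Rightarrow> 'a \<Rightarrow> 'k::field) \<Rightarrow> ('a \<Rightarrow> 'a \<Rightarrow> 'k) \<Rightarrow> ('a \<Rightarrow> 'a \<Rightarrow> 'k)" where
  "inc_comm f g = (\<lambda>x y. inc_mult f g x y - inc_mult g f x y)"

definition inc_e :: "'a \<Rightarrow> 'a \<Rightarrow> ('a \<Rightarrow> 'a \<Rightarrow> 'k::field)" where
  "inc_e x y = (\<lambda>u v. if u = x \<and> v = y then 1 else 0)"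

definition inc_linear :: "(('a::{order,finite} \<Rightarrow> 'a \<Rightarrow> 'k::field) \<Rightarrow> ('a \<Rightarrow> 'a \<Rightarrow> 'k)) \<Rightarrow> bool" where
  "inc_linear \<phi> \<longleftrightarrow>
     (\<forall>f\<in>inc_alg. \<forall>g\<in>inc_alg. \<phi> (inc_add f g) = inc_add (\<phi> f) (\<phi> g)) \<and>
     (\<forall>c. \<forall>f\<in>inc_alg. \<phi> (inc_smult c f) = inc_smult c (\<phi> f))"

definition inc_GL :: "(('a::{order,finite} \<Rightarrow> 'a \<Rightarrow> 'k::field) \<Rightarrow> ('a \<Rightarrow> 'a \<Rightarrow> 'k)) set" where
  "inc_GL = {\<phi>. inc_linear \<phi> \<and> bij_betw \<phi> inc_alg inc_alg}"

definition inc_LAut :: "(('a::{order,finite} \<Rightarrow> 'a \<Rightarrow> 'k::field) \<Rightarrow> ('a \<Rightarrow> 'a \<Rightarrow> 'k)) set" where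
  "inc_LAut = {\<phi>. \<phi> \<in> inc_GL \<and>
      (\<forall>f\<in>inc_alg. \<forall>g\<in>inc_alg. \<phi> (inc_comm f g) = inc_comm (\<phi> f) (\<phi> g))}"

definition int_len :: "'a::{order,finite} \<Rightarrow> 'a \<Rightarrow> nat" where
  "int_len x y = Max {card C - 1 | C. C \<subseteq> {z. x \<le> z \<and> z \<le> y} \<and>
                         (\<forall>a\<in>C. \<forall>b\<in>C. a \<le> b \<or> b \<le> a)}"

text \<open>Projection onto L_i = span{e_xy : l(\<lfloor>x,y\<rfloor>) = i}.\<close>
definition inc_proj :: "nat \<Rightarrow> ('a::{order,finite} \<Rightarrow> 'a \<Rightarrow> 'k::field) \<Rightarrow> ('a \<Rightarrow> 'a \<Rightarrow> 'k)" where
  "inc_proj i h = (\<lambda>u v. if u \<le> v \<and> int_len u v = i then h u v else 0)"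

text \<open>\<phi>~ : the linear map sending e_xy (in L_i, i = l(\<lfloor>x,y\<rfloor>)) to the
  L_i-component of \<phi>(e_xy), extended linearly to I(X,K).\<close>
definition tilde :: "(('a::{order,finite} \<Rightarrow> 'a \<Rightarrow> 'k::field) \<Rightarrow> ('a \<Rightarrow> 'a \<Rightarrow> 'k))
                     \<Rightarrow> ('a \<Rightarrow> 'a \<Rightarrow> 'k) \<Rightarrow> ('a \<Rightarrow> 'a \<Rightarrow> 'k)" where
  "tilde \<phi> f = (\<lambda>u v. \<Sum>p\<in>{(x, y). x \<le> y}.
      f (fst p) (snd p) * inc_proj (int_len (fst p) (snd p)) (\<phi> (inc_e (fst p) (snd p))) u v)"

definition covers :: "'a::order \<Rightarrow> 'a \<Rightarrow> bool" where
  "covers x y \<longleftrightarrow> x < y \<and> \<not> (\<exists>z. x < z \<and> z < y)"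

definition poset_connected :: "'a::order itself \<Rightarrow> bool" where
  "poset_connected _ \<longleftrightarrow>
     (\<forall>x y::'a. (\<lambda>a b. covers a b \<or> covers b a)\<^sup>*\<^sup>* x y)"

end

theory Submission
  imports Defs
begin

text \<open>Let \<open>F\<^bsub>i\<^esub> = \<Oplus>\<^bsub>k \<ge> i\<^esub> L\<^bsub>k\<^esub>\<close>. Since \<open>l(\<lfloor>u,t\<rfloor>) + l(\<lfloor>t,v\<rfloor>) \<le> l(\<lfloor>u,v\<rfloor>)\<close>, these subspaces
  form an algebra filtration, \<open>F\<^bsub>i\<^esub> F\<^bsub>j\<^esub> \<subseteq> F\<^bsub>i+j\<^esub>\<close>, and all commutators lie in \<open>F\<^bsub>1\<^esub>\<close>.
  As \<open>e\<^bsub>xy\<^esub> = [e\<^bsub>xz\<^esub>, e\<^bsub>zy\<^esub>]\<close> for \<open>x < z \<le> y\<close>, induction along a longest chain shows that a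
  Lie automorphism \<open>\<phi>\<close> maps \<open>e\<^bsub>xy\<^esub>\<close> into \<open>F\<^bsub>l(\<lfloor>x,y\<rfloor>)\<^esub>\<close>. So \<open>\<phi>\<close> preserves the filtration
  and \<open>\<phi>~\<close> is the induced map on the associated graded space, which is functorial; applied to
  \<open>\<phi>\<^sup>-\<^sup>1\<close> this gives the inverse of \<open>\<phi>~\<close>.\<close>

lemma inc_algD: "f \<in> inc_alg \<Longrightarrow> \<not> x \<le> y \<Longrightarrow> f x y = 0"
  by (simp add: inc_alg_def)

lemma inc_add_closed: "f \<in> inc_alg \<Longrightarrow> g \<in> inc_alg \<Longrightarrow> inc_add f g \<in> inc_alg"
  by (simp add: inc_alg_def inc_add_def)

lemma inc_smult_closed: "f \<in> inc_alg \<Longrightarrow> inc_smult c f \<in> inc_alg"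
  by (simp add: inc_alg_def inc_smult_def)

lemma inc_mult_closed: "inc_mult (f :: 'a::{order,finite} \<Rightarrow> 'a \<Rightarrow> 'k::field) g \<in> inc_alg"
  unfolding inc_alg_def
proof (intro CollectI allI impI)
  fix x y :: 'a
  assume "\<not> x \<le> y"
  then have empty: "{t. x \<le> t \<and> t \<le> y} = {}"
    using order_trans by blast
  show "inc_mult f g x y = 0"
    unfolding inc_mult_def empty by simp
qed

lemma inc_comm_closed: "inc_comm (f :: 'a::{order,finite} \<Rightarrow> 'a \<Rightarrow> 'k::field) g \<in> inc_alg"
  using inc_mult_closed[of f g] inc_mult_closed[of g f] by (simp add: inc_alg_def inc_comm_def)

lemma inc_e_closed: "(x::'a::{order,finite}) \<le> y \<Longrightarrow> (inc_e x y :: 'a \<Rightarrow> 'a \<Rightarrow> 'k::field) \<in> inc_alg"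
  by (simp add: inc_alg_def inc_e_def)

lemma inc_mult_e_e:
  assumes "(x::'a::{order,finite}) \<le> z" "z \<le> y"
  shows "inc_mult (inc_e x z) (inc_e z y) = (inc_e x y :: 'a \<Rightarrow> 'a \<Rightarrow> 'k::field)"
proof (intro ext)
  fix a b :: 'a
  have "inc_mult (inc_e x z) (inc_e z y) a b =
      (\<Sum>t\<in>{t. a \<le> t \<and> t \<le> b}. if t = z then inc_e x y a b else (0::'k))"
    unfolding inc_mult_def inc_e_def by (rule sum.cong) auto
  also have "\<dots> = inc_e x y a b"
    using assms by (simp add: sum.delta inc_e_def)
  finally show "inc_mult (inc_e x z) (inc_e z y) a b = (inc_e x y a b :: 'k)" .
qed

lemma inc_mult_e_e_zero:
  assumes "(x::'a::{order,finite}) \<noteq> y"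
  shows "inc_mult (inc_e z y) (inc_e x z) = (\<lambda>_ _. 0 :: 'k::field)"
  unfolding inc_mult_def inc_e_def using assms by (intro ext sum.neutral) auto

lemma inc_comm_e_e:
  assumes "(x::'a::{order,finite}) \<le> z" "z \<le> y" "x \<noteq> y"
  shows "inc_comm (inc_e x z) (inc_e z y) = (inc_e x y :: 'a \<Rightarrow> 'a \<Rightarrow> 'k::field)"
  unfolding inc_comm_def inc_mult_e_e[OF assms(1,2)] inc_mult_e_e_zero[OF assms(3)] by simp

lemma inc_linear_expand:
  fixes \<phi> :: "('a::{order,finite} \<Rightarrow> 'a \<Rightarrow> 'k::field) \<Rightarrow> ('a \<Rightarrow> 'a \<Rightarrow> 'k)"
  assumes lin: "inc_linear \<phi>" and f: "f \<in> inc_alg"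
  shows "\<phi> f u v = (\<Sum>p\<in>{(x, y). x \<le> y}. f (fst p) (snd p) * \<phi> (inc_e (fst p) (snd p)) u v)"
proof -
  have add: "\<And>f g. f \<in> inc_alg \<Longrightarrow> g \<in> inc_alg \<Longrightarrow> \<phi> (inc_add f g) = inc_add (\<phi> f) (\<phi> g)"
   and smult: "\<And>c f. f \<in> inc_alg \<Longrightarrow> \<phi> (inc_smult c f) = inc_smult c (\<phi> f)"
    using lin unfolding inc_linear_def by blast+
  have "\<phi> f u v = (\<Sum>p\<in>S. f (fst p) (snd p) * \<phi> (inc_e (fst p) (snd p)) u v)"
    if "S \<subseteq> {(x, y). x \<le> y}" "f \<in> inc_alg" "\<And>a b. (a, b) \<notin> S \<Longrightarrow> f a b = 0" for S f
    using finite[of S] that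
  proof (induction S arbitrary: f rule: finite_induct)
    case empty
    then have "f = inc_smult 0 f" by (simp add: inc_smult_def fun_eq_iff)
    then have "\<phi> f = inc_smult 0 (\<phi> f)" using smult[OF empty.prems(2)] by metis
    then show ?case by (simp add: inc_smult_def fun_eq_iff)
  next
    case (insert p S)
    let ?c = "f (fst p) (snd p)" and ?e = "inc_e (fst p) (snd p) :: 'a \<Rightarrow> 'a \<Rightarrow> 'k"
    define g where "g = (\<lambda>a b. if (a, b) = p then 0 else f a b)"
    have e: "?e \<in> inc_alg" using insert.prems(1) inc_e_closed by auto
    have g: "g \<in> inc_alg" using insert.prems(2) by (simp add: g_def inc_alg_def)
    have split: "inc_add g (inc_smult ?c ?e) = f"
      by (auto simp: g_def inc_add_def inc_smult_def inc_e_def fun_eq_iff prod_eq_iff)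
    have "\<phi> f u v = \<phi> (inc_add g (inc_smult ?c ?e)) u v"
      by (simp only: split)
    also have "\<dots> = \<phi> g u v + ?c * \<phi> ?e u v"
      unfolding add[OF g inc_smult_closed[OF e]] smult[OF e] by (simp add: inc_add_def inc_smult_def)
    also have "\<phi> g u v = (\<Sum>q\<in>S. g (fst q) (snd q) * \<phi> (inc_e (fst q) (snd q)) u v)"
      using insert.prems g by (intro insert.IH) (auto simp: g_def)
    also have "\<dots> = (\<Sum>q\<in>S. f (fst q) (snd q) * \<phi> (inc_e (fst q) (snd q)) u v)"
      using insert.hyps by (intro sum.cong) (auto simp: g_def)
    finally show ?case
      using insert.hyps by (simp add: add.commute)
  qed
  from this[OF subset_refl f] f show ?thesis by (auto simp: inc_alg_def)
qed

definition interval_chains :: "'a::{order,finite} \<Rightarrow> 'a \<Rightarrow> 'a set set" where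
  "interval_chains x y = {C. C \<subseteq> {z. x \<le> z \<and> z \<le> y} \<and> (\<forall>a\<in>C. \<forall>b\<in>C. a \<le> b \<or> b \<le> a)}"

lemma int_len_eq_Max: "int_len x y = Max ((\<lambda>C. card C - 1) ` interval_chains x y)"
  unfolding int_len_def interval_chains_def by (rule arg_cong[where f = Max]) auto

lemma int_len_ge: "C \<in> interval_chains x y \<Longrightarrow> card C - 1 \<le> int_len x y"
  unfolding int_len_eq_Max by (rule Max_ge) auto

lemma int_len_attained: "\<exists>C\<in>interval_chains x y. int_len x y = card C - 1"
proof -
  have "{} \<in> interval_chains x y" by (simp add: interval_chains_def)
  then have "int_len x y \<in> (\<lambda>C. card C - 1) ` interval_chains x y"
    unfolding int_len_eq_Max by (intro Max_in) auto
  then show ?thesis by auto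
qed

lemma int_len_attained_ends:
  assumes "(x::'a::{order,finite}) \<le> y"
  obtains C where "C \<in> interval_chains x y" "x \<in> C" "y \<in> C" "int_len x y = card C - 1"
proof -
  obtain C where C: "C \<in> interval_chains x y" "int_len x y = card C - 1"
    using int_len_attained by blast
  let ?D = "insert x (insert y C)"
  have D: "?D \<in> interval_chains x y"
    using C(1) assms by (auto simp: interval_chains_def)
  have "card C - 1 \<le> card ?D - 1"
    by (intro diff_le_mono card_mono) auto
  with int_len_ge[OF D] C(2) have "int_len x y = card ?D - 1" by simp
  with D show ?thesis using that by blast
qed

lemma int_len_pos:
  assumes "(x::'a::{order,finite}) < y"
  shows "1 \<le> int_len x y"
proof -
  have "{x, y} \<in> interval_chains x y"
    using assms by (auto simp: interval_chains_def)
  from int_len_ge[OF this] assms show ?thesis by simp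
qed

lemma int_len_superadditive:
  assumes "(x::'a::{order,finite}) \<le> t" "t \<le> y"
  shows "int_len x t + int_len t y \<le> int_len x y"
proof -
  obtain C where C: "C \<in> interval_chains x t" "t \<in> C" "int_len x t = card C - 1"
    using int_len_attained_ends[OF assms(1)] by metis
  obtain D where D: "D \<in> interval_chains t y" "t \<in> D" "int_len t y = card D - 1"
    using int_len_attained_ends[OF assms(2)] by metis
  have below: "c \<le> t" if "c \<in> C" for c using C(1) that by (auto simp: interval_chains_def)
  have above: "t \<le> d" if "d \<in> D" for d using D(1) that by (auto simp: interval_chains_def)
  have "C \<inter> D = {t}"
    using C(2) D(2) below above by (auto intro: order.antisym)
  then have "card (C \<union> D) = card C + card D - 1"
    using card_Un_Int[of C D] by simp
  moreover have "C \<union> D \<in> interval_chains x y"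
    using C(1) D(1) assms below above
    by (auto simp: interval_chains_def intro: order_trans)
  moreover have "card C \<ge> 1" "card D \<ge> 1"
    using C(2) D(2) by (auto simp: Suc_le_eq card_gt_0_iff)
  ultimately show ?thesis
    using int_len_ge[of "C \<union> D" x y] C(3) D(3) by simp
qed

lemma int_len_SucE:
  assumes "(x::'a::{order,finite}) \<le> y" "Suc i \<le> int_len x y"
  obtains z where "x < z" "z \<le> y" "i \<le> int_len z y"
proof -
  obtain C where C: "C \<in> interval_chains x y" "x \<in> C" "int_len x y = card C - 1"
    using int_len_attained_ends[OF assms(1)] by metis
  have chain: "\<forall>a\<in>C. \<forall>b\<in>C. a \<le> b \<or> b \<le> a" and sub: "C \<subseteq> {z. x \<le> z \<and> z \<le> y}"
    using C(1) by (auto simp: interval_chains_def)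
  have card_C: "card (C - {x}) = card C - 1" using C(2) by simp
  with assms(2) C(3) have "C - {x} \<noteq> {}" by (metis Suc_le_lessD card.empty not_less0)
  then obtain z where z: "z \<in> C - {x}" "\<forall>b\<in>C - {x}. b \<le> z \<longrightarrow> b = z"
    using finite_has_minimal[of "C - {x}"] by auto
  have "z \<le> b" if "b \<in> C - {x}" for b
    using chain z that by blast
  then have "C - {x} \<in> interval_chains z y"
    using chain sub by (auto simp: interval_chains_def)
  from int_len_ge[OF this] card_C C(3) assms(2) have "i \<le> int_len z y" by simp
  moreover have "x < z" "z \<le> y" using z sub by (auto simp: order_less_le)
  ultimately show ?thesis using that by blast
qed

definition inc_filt :: "nat \<Rightarrow> ('a::{order,finite} \<Rightarrow> 'a \<Rightarrow> 'k::field) set" where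
  "inc_filt i = {f \<in> inc_alg. \<forall>u v. f u v \<noteq> 0 \<longrightarrow> i \<le> int_len u v}"

lemma inc_filt_0: "inc_filt 0 = inc_alg"
  by (auto simp: inc_filt_def)

lemma inc_filtD: "f \<in> inc_filt i \<Longrightarrow> f u v \<noteq> 0 \<Longrightarrow> i \<le> int_len u v"
  by (simp add: inc_filt_def)

lemma inc_mult_filt:
  fixes f g :: "'a::{order,finite} \<Rightarrow> 'a \<Rightarrow> 'k::field"
  assumes f: "f \<in> inc_filt i" and g: "g \<in> inc_filt j"
  shows "inc_mult f g \<in> inc_filt (i + j)"
  unfolding inc_filt_def
proof (intro CollectI conjI inc_mult_closed allI impI)
  fix u v assume "inc_mult f g u v \<noteq> 0"
  then obtain t where t: "u \<le> t" "t \<le> v" "f u t \<noteq> 0" "g t v \<noteq> 0"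
    unfolding inc_mult_def by (auto elim: sum.not_neutral_contains_not_neutral)
  have "i + j \<le> int_len u t + int_len t v"
    using inc_filtD[OF f t(3)] inc_filtD[OF g t(4)] by simp
  also have "\<dots> \<le> int_len u v"
    using int_len_superadditive[OF t(1,2)] .
  finally show "i + j \<le> int_len u v" .
qed

lemma inc_comm_filt:
  fixes f g :: "'a::{order,finite} \<Rightarrow> 'a \<Rightarrow> 'k::field"
  assumes "f \<in> inc_filt i" "g \<in> inc_filt j"
  shows "inc_comm f g \<in> inc_filt (i + j)"
  unfolding inc_filt_def
proof (intro CollectI conjI inc_comm_closed allI impI)
  have fg: "inc_mult f g \<in> inc_filt (i + j)" and gf: "inc_mult g f \<in> inc_filt (i + j)"
    using inc_mult_filt[OF assms] inc_mult_filt[OF assms(2,1)] by (simp_all add: add.commute)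
  fix u v assume "inc_comm f g u v \<noteq> 0"
  then have "inc_mult f g u v \<noteq> 0 \<or> inc_mult g f u v \<noteq> 0" by (auto simp: inc_comm_def)
  then show "i + j \<le> int_len u v" using inc_filtD[OF fg] inc_filtD[OF gf] by blast
qed

text \<open>The diagonal of a commutator vanishes, since the diagonal of a product is the product
  of the diagonals.\<close>
lemma inc_comm_filt_1: "inc_comm (f :: 'a::{order,finite} \<Rightarrow> 'a \<Rightarrow> 'k::field) g \<in> inc_filt 1"
  unfolding inc_filt_def
proof (intro CollectI conjI inc_comm_closed allI impI)
  fix u v assume nz: "inc_comm f g u v \<noteq> 0"
  then have "u \<le> v" using inc_comm_closed inc_algD by blast
  moreover have "u \<noteq> v"
  proof
    assume "u = v"
    then have "{t. u \<le> t \<and> t \<le> v} = {u}" by (auto intro: order.antisym)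
    with nz \<open>u = v\<close> show False by (simp add: inc_comm_def inc_mult_def)
  qed
  ultimately show "1 \<le> int_len u v" by (intro int_len_pos) (simp add: order_less_le)
qed

lemma inc_LAutD:
  assumes "\<phi> \<in> inc_LAut"
  shows "inc_linear \<phi>" and "bij_betw \<phi> inc_alg inc_alg"
    and "\<And>f g. f \<in> inc_alg \<Longrightarrow> g \<in> inc_alg \<Longrightarrow> \<phi> (inc_comm f g) = inc_comm (\<phi> f) (\<phi> g)"
  using assms unfolding inc_LAut_def inc_GL_def by blast+

lemma inc_LAut_closed: "\<phi> \<in> inc_LAut \<Longrightarrow> f \<in> inc_alg \<Longrightarrow> \<phi> f \<in> inc_alg"
  using inc_LAutD(2) bij_betwE by blast

lemma inc_LAut_e_filt:
  fixes \<phi> :: "('a::{order,finite} \<Rightarrow> 'a \<Rightarrow> 'k::field) \<Rightarrow> ('a \<Rightarrow> 'a \<Rightarrow> 'k)"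
  assumes L: "\<phi> \<in> inc_LAut" and "x \<le> y"
  shows "\<phi> (inc_e x y) \<in> inc_filt (int_len x y)"
proof -
  have "\<forall>x y. x \<le> y \<longrightarrow> i \<le> int_len x y \<longrightarrow> \<phi> (inc_e x y) \<in> inc_filt i" for i
  proof (induction i)
    case 0
    show ?case using inc_LAut_closed[OF L inc_e_closed] by (simp add: inc_filt_0)
  next
    case (Suc i)
    show ?case
    proof (intro allI impI)
      fix x y :: 'a assume xy: "x \<le> y" and len: "Suc i \<le> int_len x y"
      obtain z where z: "x < z" "z \<le> y" "i \<le> int_len z y"
        using int_len_SucE[OF xy len] .
      have "x \<le> z" "x \<noteq> z" "x \<noteq> y" using z by auto
      have "\<phi> (inc_e x z) = \<phi> (inc_comm (inc_e x x) (inc_e x z))"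
        using inc_comm_e_e[OF order.refl \<open>x \<le> z\<close> \<open>x \<noteq> z\<close>, where 'k = 'k] by simp
      also have "\<dots> = inc_comm (\<phi> (inc_e x x)) (\<phi> (inc_e x z))"
        using inc_LAutD(3)[OF L] inc_e_closed \<open>x \<le> z\<close> by blast
      finally have xz: "\<phi> (inc_e x z) \<in> inc_filt 1"
        using inc_comm_filt_1 by metis
      have zy: "\<phi> (inc_e z y) \<in> inc_filt i"
        using Suc.IH z by blast
      have "\<phi> (inc_e x y) = \<phi> (inc_comm (inc_e x z) (inc_e z y))"
        using inc_comm_e_e[OF \<open>x \<le> z\<close> z(2) \<open>x \<noteq> y\<close>, where 'k = 'k] by simp
      also have "\<dots> = inc_comm (\<phi> (inc_e x z)) (\<phi> (inc_e z y))"
        using inc_LAutD(3)[OF L] inc_e_closed \<open>x \<le> z\<close> z(2) by blast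
      finally show "\<phi> (inc_e x y) \<in> inc_filt (Suc i)"
        using inc_comm_filt[OF xz zy] by simp
    qed
  qed
  with assms(2) show ?thesis by blast
qed

lemma tilde_apply:
  "tilde \<phi> f u v = (\<Sum>p\<in>{(x, y). x \<le> y}. f (fst p) (snd p) *
     (if u \<le> v \<and> int_len u v = int_len (fst p) (snd p) then \<phi> (inc_e (fst p) (snd p)) u v else 0))"
  unfolding tilde_def inc_proj_def by simp

lemma tilde_closed: "tilde \<phi> f \<in> inc_alg"
  unfolding inc_alg_def tilde_apply by simp

lemma inc_linear_tilde: "inc_linear (tilde \<phi>)"
  unfolding inc_linear_def
  by (auto simp: tilde_def inc_add_def inc_smult_def fun_eq_iff distrib_right sum.distrib
      sum_distrib_left mult.assoc)

lemma tilde_eq_self: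
  fixes \<chi> :: "('a::{order,finite} \<Rightarrow> 'a \<Rightarrow> 'k::field) \<Rightarrow> ('a \<Rightarrow> 'a \<Rightarrow> 'k)"
  assumes fix_e: "\<And>x y. x \<le> y \<Longrightarrow> \<chi> (inc_e x y) = inc_e x y" and f: "f \<in> inc_alg"
  shows "tilde \<chi> f = f"
proof (intro ext)
  fix u v :: 'a
  have "tilde \<chi> f u v = (\<Sum>p\<in>{(x, y). x \<le> y}. if p = (u, v) then f u v else 0)"
    unfolding tilde_apply by (intro sum.cong refl) (clarsimp simp: fix_e, auto simp: inc_e_def)
  also have "\<dots> = f u v"
    using f by (auto simp: sum.delta inc_alg_def)
  finally show "tilde \<chi> f u v = f u v" .
qed

lemma tilde_comp:
  fixes \<phi> \<psi> :: "('a::{order,finite} \<Rightarrow> 'a \<Rightarrow> 'k::field) \<Rightarrow> ('a \<Rightarrow> 'a \<Rightarrow> 'k)"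
  assumes \<phi>: "\<phi> \<in> inc_LAut" and \<psi>: "\<psi> \<in> inc_LAut" and f: "f \<in> inc_alg"
  shows "tilde (\<phi> \<circ> \<psi>) f = tilde \<phi> (tilde \<psi> f)"
proof (intro ext)
  fix u v :: 'a
  let ?P = "{(x::'a, y). x \<le> y}"
  let ?E = "\<lambda>p::'a \<times> 'a. inc_e (fst p) (snd p) :: 'a \<Rightarrow> 'a \<Rightarrow> 'k"
  let ?L = "\<lambda>p::'a \<times> 'a. int_len (fst p) (snd p)"
  let ?F = "\<lambda>p::'a \<times> 'a. f (fst p) (snd p)"
  show "tilde (\<phi> \<circ> \<psi>) f u v = tilde \<phi> (tilde \<psi> f) u v"
  proof (cases "u \<le> v")
    case False
    then show ?thesis by (simp add: tilde_apply)
  next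
    case True
    have expand: "\<phi> (\<psi> (?E p)) u v = (\<Sum>r\<in>?P. \<psi> (?E p) (fst r) (snd r) * \<phi> (?E r) u v)"
      if "p \<in> ?P" for p
      using inc_linear_expand[OF inc_LAutD(1)[OF \<phi>] inc_LAut_closed[OF \<psi> inc_e_closed]] that
      by auto
    have degrees: "(if int_len u v = ?L p then \<psi> (?E p) (fst r) (snd r) * \<phi> (?E r) u v else 0) =
        (if ?L r = ?L p then \<psi> (?E p) (fst r) (snd r) else 0) *
        (if int_len u v = ?L r then \<phi> (?E r) u v else 0)"
      if "p \<in> ?P" "r \<in> ?P" for p r
    proof (cases "\<psi> (?E p) (fst r) (snd r) = 0 \<or> \<phi> (?E r) u v = 0")
      case False
      then have "?L p \<le> ?L r" "?L r \<le> int_len u v"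
        using inc_filtD[OF inc_LAut_e_filt[OF \<psi>]] inc_filtD[OF inc_LAut_e_filt[OF \<phi>]] that
        by auto
      then show ?thesis by auto
    qed auto
    have "tilde (\<phi> \<circ> \<psi>) f u v =
        (\<Sum>p\<in>?P. ?F p * (if int_len u v = ?L p then \<phi> (\<psi> (?E p)) u v else 0))"
      using True by (simp add: tilde_apply o_def)
    also have "\<dots> = (\<Sum>p\<in>?P. \<Sum>r\<in>?P.
        ?F p * (if int_len u v = ?L p then \<psi> (?E p) (fst r) (snd r) * \<phi> (?E r) u v else 0))"
      by (intro sum.cong refl) (auto simp: expand sum_distrib_left)
    also have "\<dots> = (\<Sum>r\<in>?P. \<Sum>p\<in>?P. ?F p * (if ?L r = ?L p then \<psi> (?E p) (fst r) (snd r) else 0) *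
        (if int_len u v = ?L r then \<phi> (?E r) u v else 0))"
      by (subst sum.swap) (intro sum.cong refl, simp add: degrees mult.assoc)
    also have "\<dots> = tilde \<phi> (tilde \<psi> f) u v"
      using True unfolding tilde_apply[of \<phi>] tilde_apply[of \<psi>] sum_distrib_right
      by (intro sum.cong refl) auto
    finally show ?thesis .
  qed
qed

lemma inv_into_inc_LAut:
  assumes L: "\<phi> \<in> inc_LAut"
  shows "inv_into inc_alg \<phi> \<in> inc_LAut"
proof -
  let ?\<psi> = "inv_into inc_alg \<phi>"
  have bij: "bij_betw \<phi> inc_alg inc_alg" using inc_LAutD(2)[OF L] .
  then have inj: "inj_on \<phi> inc_alg" and onto: "\<phi> ` inc_alg = inc_alg"
    by (auto simp: bij_betw_def)
  have add: "\<And>f g. f \<in> inc_alg \<Longrightarrow> g \<in> inc_alg \<Longrightarrow> \<phi> (inc_add f g) = inc_add (\<phi> f) (\<phi> g)"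
   and smult: "\<And>c f. f \<in> inc_alg \<Longrightarrow> \<phi> (inc_smult c f) = inc_smult c (\<phi> f)"
    using inc_LAutD(1)[OF L] unfolding inc_linear_def by blast+
  note comm = inc_LAutD(3)[OF L]
  have closed: "?\<psi> f \<in> inc_alg" and inverse: "\<phi> (?\<psi> f) = f" if "f \<in> inc_alg" for f
    using inv_into_into[of f \<phi> inc_alg] f_inv_into_f[of f \<phi> inc_alg] that onto by simp_all
  have "bij_betw ?\<psi> inc_alg inc_alg" using bij_betw_inv_into[OF bij] .
  moreover have "?\<psi> (inc_add f g) = inc_add (?\<psi> f) (?\<psi> g)" if "f \<in> inc_alg" "g \<in> inc_alg" for f g
    by (rule inv_into_f_eq[OF inj inc_add_closed[OF closed closed]])
      (simp_all add: that add closed inverse)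
  moreover have "?\<psi> (inc_smult c f) = inc_smult c (?\<psi> f)" if "f \<in> inc_alg" for c f
    by (rule inv_into_f_eq[OF inj inc_smult_closed[OF closed]])
      (simp_all add: that smult closed inverse)
  moreover have "?\<psi> (inc_comm f g) = inc_comm (?\<psi> f) (?\<psi> g)" if "f \<in> inc_alg" "g \<in> inc_alg" for f g
    by (rule inv_into_f_eq[OF inj inc_comm_closed]) (simp_all add: that comm closed inverse)
  ultimately show ?thesis unfolding inc_LAut_def inc_GL_def inc_linear_def by blast
qed

lemma tilde_bij:
  assumes L: "\<phi> \<in> inc_LAut"
  shows "bij_betw (tilde \<phi>) inc_alg inc_alg"
proof -
  let ?\<psi> = "inv_into inc_alg \<phi>"
  have L': "?\<psi> \<in> inc_LAut" using inv_into_inc_LAut[OF L] .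
  have bij: "bij_betw \<phi> inc_alg inc_alg" using inc_LAutD(2)[OF L] .
  have "(\<phi> \<circ> ?\<psi>) (inc_e x y) = inc_e x y" "(?\<psi> \<circ> \<phi>) (inc_e x y) = inc_e x y" if "x \<le> y" for x y
    using bij_betw_inv_into_right[OF bij] bij_betw_inv_into_left[OF bij] inc_e_closed[OF that]
    by simp_all
  then have "tilde ?\<psi> (tilde \<phi> f) = f" "tilde \<phi> (tilde ?\<psi> f) = f" if "f \<in> inc_alg" for f
    using tilde_comp[OF L' L that] tilde_comp[OF L L' that] tilde_eq_self that by metis+
  then show ?thesis
    by (intro bij_betw_byWitness[where f' = "tilde ?\<psi>"]) (auto intro: tilde_closed)
qed

theorem proposition4p2:
  assumes "poset_connected TYPE('a::{order,finite})"
  shows "(\<forall>\<phi>::('a \<Rightarrow> 'a \<Rightarrow> 'k::field) \<Rightarrow> ('a \<Rightarrow> 'a \<Rightarrow> 'k). \<phi> \<in> inc_LAut \<longrightarrow> tilde \<phi> \<in> inc_GL) \<and>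
         (\<forall>\<phi> \<psi>::('a \<Rightarrow> 'a \<Rightarrow> 'k) \<Rightarrow> ('a \<Rightarrow> 'a \<Rightarrow> 'k). \<phi> \<in> inc_LAut \<longrightarrow> \<psi> \<in> inc_LAut \<longrightarrow>
            (\<forall>f\<in>inc_alg. tilde (\<phi> \<circ> \<psi>) f = (tilde \<phi> \<circ> tilde \<psi>) f))"
  using tilde_bij inc_linear_tilde tilde_comp by (auto simp: inc_GL_def)

end
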